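(* For every $s\in[0,1)$ there exists $C>0$ such that for all $t\ge1$, $\mathbb P_0(Y_t=0)\le C\,t^{-\frac{1-s}{2}}$, where $(Y_t)$ is the Markov chain on $\mathbb N$ with kernel $Q_s$ started at $0$.
   Context: $Q_s$ is the Markov kernel on $\mathbb N=\{0,1,\dots\}$ with $Q_s(0,1)=1$, $Q_s(r,r+1)=\max(\frac12-\frac s{4r},\frac14)$ and $Q_s(r,r-1)=1-Q_s(r,r+1)$ for $r\ge1$. *)

theory Defs
  imports "HOL-Probability.Probability"
begin

definition up_prob :: "real \<Rightarrow> nat \<Rightarrow> real" where
  "up_prob s r = max (1/2 - s / (4 * real r)) (1/4)"

definition Q :: "real \<Rightarrow> nat \<Rightarrow> nat pmf" where
  "Q s r = (if r = 0 then return_pmf 1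
            else map_pmf (\<lambda>b. if b then r + 1 else r - 1) (bernoulli_pmf (up_prob s r)))"

definition chain_law :: "real \<Rightarrow> nat \<Rightarrow> nat \<Rightarrow> nat pmf" where
  "chain_law s x t = ((\<lambda>d. bind_pmf d (Q s)) ^^ t) (return_pmf x)"

end

theory Submission
  imports Defs
begin

text \<open>
  Q_s is the reversible birth-death chain with conductances c x on the edges {x, x + 1}, where
  c x \<approx> x^(-s), and weights \<pi> x = c (x - 1) + c x. The density h_t = P_0(Y_t = \<cdot>) / \<pi> evolves by
  the transition operator P, which is self-adjoint in L^2(\<pi>); hence h_2n(0) = \<Parallel>h_n\<Parallel>^2 is
  nonincreasing in n, and (n + 1) h_2n(0) is at most the expected number of visits to 0 before
  time T = 2n + 1. For the scale function g x = \<Sum>k<x. 1 / c k one has P g = g off 0, so that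
  number of visits equals E_0 g(Y_T). Now g x \<le> 3 x^(1+s), and E_0 Y_T^2 \<le> T because c decreases;
  splitting x^(1+s) \<le> R^(1+s) + R^(s-1) x^2 at R = \<surd>T bounds it by 6 T^((1+s)/2).
\<close>

lemma one_minus_powr_le:
  fixes x s :: real
  assumes "0 \<le> x" "x < 1" "0 \<le> s" "s \<le> 1"
  shows "(1 - x) powr s \<le> 1 - s * x"
  using Youngs_inequality_0[of s "1 - s" "1 - x" 1] assms by (simp add: algebra_simps)

lemma ratio_le_powr:
  fixes a s :: real
  assumes "a > 0" "0 \<le> s" "s \<le> 1"
  shows "(a + 1) / (a + 1 - s) \<le> ((a + 1) / a) powr s"
proof -
  have "(a / (a + 1)) powr s = (1 - 1 / (a + 1)) powr s"
    using assms by (simp add: field_simps)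
  also have "\<dots> \<le> 1 - s * (1 / (a + 1))"
    using assms by (intro one_minus_powr_le) auto
  also have "\<dots> = (a + 1 - s) / (a + 1)"
    using assms by (simp add: field_simps)
  finally have "(a / (a + 1)) powr s \<le> (a + 1 - s) / (a + 1)" .
  then have "1 / ((a + 1 - s) / (a + 1)) \<le> 1 / (a / (a + 1)) powr s"
    using assms by (intro divide_left_mono) auto
  then show ?thesis
    using assms by (simp add: powr_divide)
qed

lemma powr_le_add_square:
  fixes R x p :: real
  assumes "R > 0" "x \<ge> 0" "0 \<le> p" "p \<le> 2"
  shows "x powr p \<le> R powr p + R powr (p - 2) * x\<^sup>2"
proof (cases "x \<le> R")
  case True
  then have "x powr p \<le> R powr p" using assms by (intro powr_mono2) auto
  then show ?thesis by (simp add: add_increasing2)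
next
  case False
  then have "x > 0" using assms by simp
  then have "x powr p = x\<^sup>2 * x powr (p - 2)"
    using powr_add[of x 2 "p - 2"] by simp
  also have "\<dots> \<le> x\<^sup>2 * R powr (p - 2)"
    using False assms by (intro mult_left_mono powr_mono2') auto
  finally show ?thesis by (simp add: add_increasing mult.commute)
qed

locale birth_death =
  fixes c :: "nat \<Rightarrow> real"
  assumes conductance_pos: "c n > 0"
begin

definition cdown :: "nat \<Rightarrow> real" where
  "cdown y = (if y = 0 then 0 else c (y - 1))"

definition weight :: "nat \<Rightarrow> real" where
  "weight y = cdown y + c y"

definition transition :: "(nat \<Rightarrow> real) \<Rightarrow> nat \<Rightarrow> real" where
  "transition \<phi> x = (c x * \<phi> (x + 1) + cdown x * \<phi> (x - 1)) / weight x"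

text \<open>\<open>heat_kernel t y = P\<^sub>0(Y\<^sub>t = y) / weight y\<close> (cf. \<open>pmf_chain_law\<close>); by reversibility the
  forward equation for the law becomes the backward equation for this density.\<close>
fun heat_kernel :: "nat \<Rightarrow> nat \<Rightarrow> real" where
  "heat_kernel 0 = (\<lambda>y. if y = 0 then 1 / weight 0 else 0)"
| "heat_kernel (Suc t) = transition (heat_kernel t)"

definition scale :: "nat \<Rightarrow> real" where
  "scale x = (\<Sum>k<x. 1 / c k)"

text \<open>\<open>expect N t \<phi> = E\<^sub>0 \<phi>(Y\<^sub>t)\<close> whenever \<open>t \<le> N\<close>, since \<open>heat_kernel t\<close> vanishes beyond \<open>t\<close>.\<close>
definition expect :: "nat \<Rightarrow> nat \<Rightarrow> (nat \<Rightarrow> real) \<Rightarrow> real" where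
  "expect N t \<phi> = (\<Sum>y\<le>N. weight y * heat_kernel t y * \<phi> y)"

lemma cdown_nonneg: "cdown y \<ge> 0"
  using conductance_pos by (simp add: cdown_def less_imp_le)

lemma weight_pos: "weight y > 0"
  using conductance_pos[of y] cdown_nonneg[of y] by (simp add: weight_def)

lemma weight_0: "weight 0 = c 0"
  by (simp add: weight_def cdown_def)

lemma weight_mult_transition:
  "weight x * transition \<phi> x = c x * \<phi> (x + 1) + cdown x * \<phi> (x - 1)"
  using weight_pos[of x] by (simp add: transition_def)

lemma transition_const: "transition (\<lambda>_. a) = (\<lambda>_. a)"
proof
  fix x show "transition (\<lambda>_. a) x = a"
    using weight_pos[of x] by (simp add: transition_def weight_def field_simps)
qed

lemma heat_kernel_nonneg: "heat_kernel t y \<ge> 0"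
proof (induction t arbitrary: y)
  case (Suc t)
  show ?case
    using Suc weight_pos[of y] conductance_pos[of y] cdown_nonneg[of y]
    by (simp add: transition_def)
qed (simp add: less_imp_le weight_pos)

lemma heat_kernel_eq_0: "t < y \<Longrightarrow> heat_kernel t y = 0"
  by (induction t arbitrary: y) (auto simp: transition_def cdown_def)

lemma heat_kernel_odd: "odd (t + y) \<Longrightarrow> heat_kernel t y = 0"
proof (induction t arbitrary: y)
  case (Suc t)
  then show ?case by (cases y) (auto simp: transition_def cdown_def)
qed (auto elim: oddE)

lemma sum_weight_transition_swap:
  assumes "u N = 0" "u (N + 1) = 0"
  shows "(\<Sum>y\<le>N. weight y * transition u y * \<phi> y) = (\<Sum>y\<le>N. weight y * u y * transition \<phi> y)"
proof -
  have down: "(\<Sum>y\<le>N. cdown y * u (y - 1) * \<phi> y) = (\<Sum>y\<le>N. u y * c y * \<phi> (y + 1))"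
  proof (cases N)
    case (Suc M)
    have "(\<Sum>y\<le>Suc M. cdown y * u (y - 1) * \<phi> y) = (\<Sum>y\<le>M. u y * c y * \<phi> (y + 1))"
      by (simp only: sum.atMost_Suc_shift) (simp add: cdown_def mult_ac)
    also have "\<dots> = (\<Sum>y\<le>Suc M. u y * c y * \<phi> (y + 1))"
      using assms Suc by simp
    finally show ?thesis using Suc by simp
  qed (use assms in \<open>simp add: cdown_def\<close>)
  have up: "(\<Sum>y\<le>N. c y * u (y + 1) * \<phi> y) = (\<Sum>y\<le>N. u y * cdown y * \<phi> (y - 1))"
  proof (cases N)
    case (Suc M)
    have "(\<Sum>y\<le>Suc M. c y * u (y + 1) * \<phi> y) = (\<Sum>y\<le>M. c y * u (y + 1) * \<phi> y)"
      using assms Suc by simp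
    also have "\<dots> = (\<Sum>y\<le>Suc M. u y * cdown y * \<phi> (y - 1))"
      by (simp only: sum.atMost_Suc_shift) (simp add: cdown_def mult_ac)
    finally show ?thesis using Suc by simp
  qed (use assms in \<open>simp add: cdown_def\<close>)
  have "(\<Sum>y\<le>N. weight y * transition u y * \<phi> y)
      = (\<Sum>y\<le>N. c y * u (y + 1) * \<phi> y) + (\<Sum>y\<le>N. cdown y * u (y - 1) * \<phi> y)"
    by (simp add: weight_mult_transition sum.distrib[symmetric] distrib_right)
  also have "\<dots> = (\<Sum>y\<le>N. u y * cdown y * \<phi> (y - 1)) + (\<Sum>y\<le>N. u y * c y * \<phi> (y + 1))"
    by (simp only: up down)
  also have "\<dots> = (\<Sum>y\<le>N. u y * (c y * \<phi> (y + 1) + cdown y * \<phi> (y - 1)))"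
    by (simp add: sum.distrib[symmetric] algebra_simps)
  also have "\<dots> = (\<Sum>y\<le>N. u y * (weight y * transition \<phi> y))"
    by (simp only: weight_mult_transition)
  also have "\<dots> = (\<Sum>y\<le>N. weight y * u y * transition \<phi> y)"
    by (simp add: mult_ac)
  finally show ?thesis .
qed

lemma expect_0: "expect N 0 \<phi> = \<phi> 0"
  using weight_pos[of 0] by (simp add: expect_def if_distrib if_distribR cong: if_cong)

lemma expect_Suc: "t < N \<Longrightarrow> expect N (Suc t) \<phi> = expect N t (transition \<phi>)"
  unfolding expect_def heat_kernel.simps
  by (rule sum_weight_transition_swap) (simp_all add: heat_kernel_eq_0)

lemma expect_mono: "(\<And>y. \<phi> y \<le> \<psi> y) \<Longrightarrow> expect N t \<phi> \<le> expect N t \<psi>"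
  unfolding expect_def
  by (intro sum_mono mult_left_mono mult_nonneg_nonneg less_imp_le[OF weight_pos] heat_kernel_nonneg)

lemma expect_const: "t \<le> N \<Longrightarrow> expect N t (\<lambda>_. a) = a"
  by (induction t) (simp_all add: expect_0 expect_Suc transition_const)

lemma expect_affine:
  assumes "t \<le> N"
  shows "expect N t (\<lambda>y. a + b * \<phi> y) = a + b * expect N t \<phi>"
proof -
  have "expect N t (\<lambda>y. a + b * \<phi> y) = expect N t (\<lambda>_. a) + b * expect N t \<phi>"
    by (simp add: expect_def algebra_simps sum.distrib sum_distrib_left)
  then show ?thesis using expect_const[OF assms] by simp
qed

lemma expect_heat_kernel: "m \<le> N \<Longrightarrow> expect N m (heat_kernel k) = heat_kernel (m + k) 0"
proof (induction m arbitrary: k)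
  case (Suc m)
  have "expect N (Suc m) (heat_kernel k) = expect N m (heat_kernel (Suc k))"
    using Suc.prems by (simp add: expect_Suc)
  also have "\<dots> = heat_kernel (m + Suc k) 0"
    by (rule Suc.IH) (use Suc.prems in simp)
  finally show ?case by simp
qed (simp add: expect_0)

lemma square_transition_le: "(transition \<phi> x)\<^sup>2 \<le> transition (\<lambda>y. (\<phi> y)\<^sup>2) x"
proof -
  define a b u v where "a = c x" and "b = cdown x" and "u = \<phi> (x + 1)" and "v = \<phi> (x - 1)"
  have w: "weight x = a + b" "a + b > 0"
    using weight_pos[of x] by (simp_all add: a_def b_def weight_def)
  have "(a * u + b * v)\<^sup>2 \<le> (a * u\<^sup>2 + b * v\<^sup>2) * (a + b)"
  proof -
    have "(a * u\<^sup>2 + b * v\<^sup>2) * (a + b) - (a * u + b * v)\<^sup>2 = a * b * (u - v)\<^sup>2"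
      by (simp add: power2_eq_square algebra_simps)
    moreover have "a * b * (u - v)\<^sup>2 \<ge> 0"
      using conductance_pos[of x] cdown_nonneg[of x] by (simp add: a_def b_def)
    ultimately show ?thesis by linarith
  qed
  then show ?thesis
    unfolding transition_def w(1) a_def[symmetric] b_def[symmetric] u_def[symmetric] v_def[symmetric]
    using w(2) by (simp add: divide_simps power2_eq_square)
qed

text \<open>\<open>heat_kernel (2 n) 0\<close> is the squared weighted norm of \<open>heat_kernel n\<close>, and
  \<open>square_transition_le\<close> makes \<open>transition\<close> a contraction for that norm.\<close>
lemma heat_kernel_return_even_Suc_le: "heat_kernel (2 * Suc n) 0 \<le> heat_kernel (2 * n) 0"
proof -
  define u where "u y = (heat_kernel n y)\<^sup>2" for y
  have "heat_kernel (2 * Suc n) 0 = expect (Suc n) (Suc n) (heat_kernel (Suc n))"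
    by (simp only: expect_heat_kernel[OF order_refl] mult_2)
  also have "\<dots> = (\<Sum>y\<le>Suc n. weight y * (transition (heat_kernel n) y)\<^sup>2)"
    by (simp add: expect_def power2_eq_square mult.assoc)
  also have "\<dots> \<le> (\<Sum>y\<le>Suc n. weight y * transition u y * 1)"
    unfolding u_def
    by (intro sum_mono) (simp add: mult_left_mono[OF square_transition_le] less_imp_le[OF weight_pos])
  also have "\<dots> = (\<Sum>y\<le>Suc n. weight y * u y * transition (\<lambda>_. 1) y)"
    by (rule sum_weight_transition_swap) (simp_all add: u_def heat_kernel_eq_0)
  also have "\<dots> = expect (Suc n) n (heat_kernel n)"
    by (simp add: transition_const expect_def u_def power2_eq_square mult.assoc)
  also have "\<dots> = heat_kernel (2 * n) 0"
    by (simp only: expect_heat_kernel[OF le_SucI[OF order_refl]] mult_2)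
  finally show ?thesis .
qed

lemma heat_kernel_return_even_antimono: "j \<le> n \<Longrightarrow> heat_kernel (2 * n) 0 \<le> heat_kernel (2 * j) 0"
proof (induction n rule: dec_induct)
  case (step n)
  then show ?case using heat_kernel_return_even_Suc_le[of n] by linarith
qed simp

lemma heat_kernel_return_le_sum:
  "real (Suc n) * heat_kernel (2 * n) 0 \<le> (\<Sum>k<Suc (2 * n). heat_kernel k 0)"
proof -
  have "real (Suc n) * heat_kernel (2 * n) 0 \<le> (\<Sum>j\<le>n. heat_kernel (2 * j) 0)"
    using sum_mono[of "{..n}" "\<lambda>_. heat_kernel (2 * n) 0" "\<lambda>j. heat_kernel (2 * j) 0"]
      heat_kernel_return_even_antimono by simp
  also have "\<dots> = (\<Sum>k\<in>(\<lambda>j. 2 * j) ` {..n}. heat_kernel k 0)"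
    by (simp add: sum.reindex inj_on_def)
  also have "\<dots> \<le> (\<Sum>k<Suc (2 * n). heat_kernel k 0)"
    by (rule sum_mono2) (auto simp: heat_kernel_nonneg)
  finally show ?thesis .
qed

lemma transition_scale: "transition scale = (\<lambda>x. scale x + (if x = 0 then 1 / weight 0 else 0))"
proof
  fix x
  show "transition scale x = scale x + (if x = 0 then 1 / weight 0 else 0)"
  proof (cases x)
    case 0
    then show ?thesis by (simp add: transition_def scale_def weight_0)
  next
    case (Suc m)
    have "c x * scale (x + 1) = c x * scale x + 1"
      using conductance_pos[of x] by (simp add: scale_def field_simps)
    moreover have "cdown x * scale (x - 1) = cdown x * scale x - 1"
      using conductance_pos[of m] Suc by (simp add: scale_def cdown_def field_simps)
    ultimately have "weight x * transition scale x = weight x * scale x"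
      unfolding weight_mult_transition by (simp add: weight_def algebra_simps)
    then show ?thesis using weight_pos[of x] Suc by simp
  qed
qed

lemma expect_scale: "t \<le> N \<Longrightarrow> expect N t scale = (\<Sum>k<t. heat_kernel k 0)"
proof (induction t)
  case 0
  then show ?case by (simp add: expect_0 scale_def)
next
  case (Suc t)
  have "expect N (Suc t) scale = expect N t (\<lambda>x. scale x + (if x = 0 then 1 / weight 0 else 0))"
    using Suc.prems by (simp only: expect_Suc transition_scale Suc_le_eq)
  also have "\<dots> = expect N t scale + weight 0 * heat_kernel t 0 * (1 / weight 0)"
    by (simp add: expect_def distrib_left sum.distrib if_distrib[where f = "\<lambda>z. _ * z"] cong: if_cong)
  finally show ?case using Suc weight_pos[of 0] by simp
qed

lemma transition_of_nat_square_le: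
  assumes "decseq c"
  shows "transition (\<lambda>y. (real y)\<^sup>2) x \<le> (real x)\<^sup>2 + 1"
proof (cases x)
  case 0
  then show ?thesis by (simp add: transition_def weight_0)
next
  case (Suc m)
  have "c (Suc m) * (2 * real m + 2) \<le> c m * (2 * real m + 2)"
    using decseq_SucD[OF assms] by (rule mult_right_mono) simp
  then have "c (Suc m) * (real m + 2)\<^sup>2 + c m * (real m)\<^sup>2
      \<le> (c m + c (Suc m)) * ((real m + 1)\<^sup>2 + 1)"
    by (simp add: power2_eq_square algebra_simps)
  then have "weight x * transition (\<lambda>y. (real y)\<^sup>2) x \<le> weight x * ((real x)\<^sup>2 + 1)"
    unfolding weight_mult_transition using Suc
    by (simp add: weight_def cdown_def add.commute[of 1] add.commute[of 2])
  then show ?thesis using weight_pos[of x] by simp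
qed

lemma expect_of_nat_square_le:
  assumes "decseq c" "t \<le> N"
  shows "expect N t (\<lambda>y. (real y)\<^sup>2) \<le> t"
  using assms(2)
proof (induction t)
  case (Suc t)
  have "expect N (Suc t) (\<lambda>y. (real y)\<^sup>2) = expect N t (transition (\<lambda>y. (real y)\<^sup>2))"
    by (rule expect_Suc) (use Suc.prems in simp)
  also have "\<dots> \<le> expect N t (\<lambda>y. 1 + 1 * (real y)\<^sup>2)"
    by (rule expect_mono) (metis transition_of_nat_square_le[OF assms(1)] add.commute mult_1)
  also have "\<dots> = 1 + expect N t (\<lambda>y. (real y)\<^sup>2)"
    using Suc.prems by (subst expect_affine) simp_all
  finally show ?case using Suc by simp
qed (simp add: expect_0)

lemma scale_bound_pos:
  assumes "\<And>x. scale x \<le> A * real x powr p"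
  shows "A > 0"
proof -
  have "0 < 1 / c 0" using conductance_pos[of 0] by simp
  also have "\<dots> = scale 1" by (simp add: scale_def)
  also have "\<dots> \<le> A" using assms[of 1] by simp
  finally show ?thesis .
qed

lemma sum_heat_kernel_return_le:
  assumes "decseq c" and scale_le: "\<And>x. scale x \<le> A * real x powr p"
    and "0 \<le> p" "p \<le> 2" "T \<ge> 1"
  shows "(\<Sum>k<T. heat_kernel k 0) \<le> 2 * A * real T powr (p / 2)"
proof -
  define R where "R = sqrt (real T)"
  have "R > 0" using assms by (simp add: R_def)
  have "A \<ge> 0" using scale_bound_pos[OF scale_le] by simp
  have R_powr: "R powr q = real T powr (q / 2)" for q
    by (simp add: R_def powr_half_sqrt[symmetric] powr_powr)
  have "R powr (p - 2) * real T = real T powr ((p - 2) / 2 + 1)"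
    using assms by (simp add: R_powr powr_add)
  also have "\<dots> = real T powr (p / 2)" by (simp add: field_simps)
  finally have R_powr_T: "R powr (p - 2) * real T = real T powr (p / 2)" .
  have "(\<Sum>k<T. heat_kernel k 0) = expect T T scale"
    by (simp add: expect_scale)
  also have "\<dots> \<le> expect T T (\<lambda>y. A * R powr p + A * R powr (p - 2) * (real y)\<^sup>2)"
  proof (rule expect_mono)
    fix y
    have "scale y \<le> A * real y powr p" by (rule scale_le)
    also have "\<dots> \<le> A * (R powr p + R powr (p - 2) * (real y)\<^sup>2)"
      using \<open>R > 0\<close> \<open>A \<ge> 0\<close> assms by (intro mult_left_mono powr_le_add_square) auto
    finally show "scale y \<le> A * R powr p + A * R powr (p - 2) * (real y)\<^sup>2"
      by (simp add: algebra_simps)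
  qed
  also have "\<dots> = A * R powr p + A * R powr (p - 2) * expect T T (\<lambda>y. (real y)\<^sup>2)"
    by (simp add: expect_affine)
  also have "\<dots> \<le> A * R powr p + A * R powr (p - 2) * real T"
    using \<open>A \<ge> 0\<close> expect_of_nat_square_le[OF assms(1) order_refl] by (simp add: mult_left_mono)
  also have "\<dots> = 2 * A * real T powr (p / 2)"
    using R_powr[of p] R_powr_T by (simp add: algebra_simps)
  finally show ?thesis .
qed

lemma heat_kernel_return_le:
  assumes "decseq c" and "\<And>x. scale x \<le> A * real x powr p"
    and "0 \<le> p" "p \<le> 2" "t \<ge> 1"
  shows "heat_kernel t 0 \<le> 8 * A * real t powr (p / 2 - 1)"
proof (cases "even t")
  case False
  then have "heat_kernel t 0 = 0" by (simp add: heat_kernel_odd)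
  moreover have "A > 0" using scale_bound_pos[OF assms(2)] .
  ultimately show ?thesis by simp
next
  case True
  then obtain n where t: "t = 2 * n" by (auto elim: evenE)
  have "real t / 2 * heat_kernel t 0 \<le> real (Suc n) * heat_kernel t 0"
    using t by (intro mult_right_mono heat_kernel_nonneg) simp
  also have "\<dots> \<le> (\<Sum>k<Suc t. heat_kernel k 0)"
    using heat_kernel_return_le_sum[of n] t by simp
  also have "\<dots> \<le> 2 * A * real (Suc t) powr (p / 2)"
    using assms by (intro sum_heat_kernel_return_le) auto
  also have "\<dots> \<le> 2 * A * (2 * real t powr (p / 2))"
  proof -
    have "real (Suc t) powr (p / 2) \<le> (2 * real t) powr (p / 2)"
      using assms by (intro powr_mono2) auto
    also have "\<dots> \<le> 2 * real t powr (p / 2)"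
      using assms powr_mono[of "p / 2" 1 2] by (simp add: powr_mult)
    finally show ?thesis
      using scale_bound_pos[OF assms(2)] by (intro mult_left_mono) auto
  qed
  finally have "real t / 2 * heat_kernel t 0 \<le> 4 * A * real t powr (p / 2)" by simp
  then have "heat_kernel t 0 \<le> 8 * A * real t powr (p / 2) / real t"
    using assms by (simp add: field_simps)
  also have "\<dots> = 8 * A * real t powr (p / 2 - 1)"
    using assms by (simp add: powr_diff)
  finally show ?thesis .
qed

end

text \<open>The ratio \<open>(2x - s) / (2x + s)\<close> of consecutive conductances is exactly what makes
  \<open>conductance s x / weight x = up_prob s x\<close> (see \<open>weight_mult_up_prob\<close>).\<close>
fun conductance :: "real \<Rightarrow> nat \<Rightarrow> real" where
  "conductance s 0 = 1"
| "conductance s (Suc n) = conductance s n * (2 * real (Suc n) - s) / (2 * real (Suc n) + s)"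

lemma conductance_pos: "0 \<le> s \<Longrightarrow> s < 1 \<Longrightarrow> conductance s n > 0"
  by (induction n) auto

locale kernel_Q =
  fixes s :: real
  assumes s_nonneg: "0 \<le> s" and s_less_1: "s < 1"

sublocale kernel_Q \<subseteq> birth_death "conductance s"
  using conductance_pos kernel_Q_axioms by unfold_locales (simp add: kernel_Q_def)

context kernel_Q
begin

lemma conductance_decseq: "decseq (conductance s)"
proof (rule decseq_SucI)
  fix n
  have "(2 * real (Suc n) - s) / (2 * real (Suc n) + s) \<le> 1" using s_nonneg s_less_1 by simp
  from mult_left_le[OF this less_imp_le[OF conductance_pos[of n]]]
  show "conductance s (Suc n) \<le> conductance s n" by simp
qed

lemma inverse_conductance_growth:
  assumes "k \<ge> 1"
  shows "1 / conductance s k * (1 + s / 2) powr s \<le> 1 / conductance s 1 * (real k + s / 2) powr s"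
  using assms
proof (induction k rule: dec_induct)
  case (step k)
  define a where "a = real k + s / 2"
  have "a > 0" using step s_nonneg by (simp add: a_def)
  have ratio: "(2 * real (Suc k) + s) / (2 * real (Suc k) - s) = (a + 1) / (a + 1 - s)"
    using s_less_1 by (simp add: a_def divide_simps) (simp add: algebra_simps)
  have "1 / conductance s (Suc k) = 1 / conductance s k * ((a + 1) / (a + 1 - s))"
    unfolding ratio[symmetric] by simp
  then have "1 / conductance s (Suc k) * (1 + s / 2) powr s
      = 1 / conductance s k * (1 + s / 2) powr s * ((a + 1) / (a + 1 - s))"
    by (simp only: mult_ac)
  also have "\<dots> \<le> 1 / conductance s 1 * a powr s * ((a + 1) / (a + 1 - s))"
    using step.IH \<open>a > 0\<close> s_less_1 by (intro mult_right_mono) (auto simp: a_def)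
  also have "\<dots> \<le> 1 / conductance s 1 * a powr s * ((a + 1) / a) powr s"
    using \<open>a > 0\<close> s_nonneg s_less_1 conductance_pos[of 1]
    by (intro mult_left_mono ratio_le_powr) auto
  also have "\<dots> = 1 / conductance s 1 * (a * ((a + 1) / a)) powr s"
    using \<open>a > 0\<close> by (simp only: powr_mult mult.assoc)
  also have "\<dots> = 1 / conductance s 1 * (real (Suc k) + s / 2) powr s"
    using \<open>a > 0\<close> by (simp add: a_def add_ac)
  finally show ?case .
qed simp

lemma inverse_conductance_le: "1 / conductance s k \<le> 3 * (real k + 1) powr s"
proof (cases "k = 0")
  case False
  then have "1 / conductance s k \<le> 1 / conductance s k * (1 + s / 2) powr s"
    using s_nonneg conductance_pos[of k] ge_one_powr_ge_zero[of "1 + s / 2" s]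
    by (intro mult_le_cancel_left1[THEN iffD2]) simp
  also have "\<dots> \<le> 1 / conductance s 1 * (real k + s / 2) powr s"
    using False by (intro inverse_conductance_growth) simp
  also have "\<dots> = (2 + s) / (2 - s) * (real k + s / 2) powr s"
    using s_less_1 by simp
  also have "\<dots> \<le> 3 * (real k + 1) powr s"
    using s_nonneg s_less_1 by (intro mult_mono powr_mono2) (auto simp: divide_simps)
  finally show ?thesis .
qed simp

lemma scale_le: "scale x \<le> 3 * real x powr (1 + s)"
proof (cases "x = 0")
  case False
  have "scale x \<le> (\<Sum>k<x. 3 * real x powr s)"
    unfolding scale_def
  proof (rule sum_mono)
    fix k assume "k \<in> {..<x}"
    then have "(real k + 1) powr s \<le> real x powr s"
      using s_nonneg by (intro powr_mono2) auto
    then show "1 / conductance s k \<le> 3 * real x powr s"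
      using inverse_conductance_le[of k] by simp
  qed
  also have "\<dots> = 3 * real x powr (1 + s)"
    using False by (simp add: powr_add)
  finally show ?thesis .
qed (simp add: scale_def)

lemma weight_mult_up_prob: "x \<ge> 1 \<Longrightarrow> weight x * up_prob s x = conductance s x"
proof -
  assume "x \<ge> 1"
  then obtain m where x: "x = Suc m" by (cases x) auto
  have pos: "2 * real x + s > 0" "real x > 0" using s_nonneg \<open>x \<ge> 1\<close> by auto
  have "s / (4 * real x) \<le> 1 / 4" using \<open>x \<ge> 1\<close> s_less_1 by (simp add: divide_simps)
  then have up: "up_prob s x = (2 * real x - s) / (4 * real x)"
    using \<open>x \<ge> 1\<close> by (simp add: up_prob_def field_simps)
  have w: "weight x = conductance s m * (4 * real x) / (2 * real x + s)"
    using s_nonneg by (simp add: weight_def cdown_def x field_simps)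
  have "weight x * up_prob s x
      = conductance s m * (4 * real x) / (2 * real x + s) * ((2 * real x - s) / (4 * real x))"
    by (simp only: up w)
  also have "\<dots> = conductance s m * (2 * real x - s) / (2 * real x + s)"
    using pos by simp
  also have "\<dots> = conductance s x" by (simp add: x)
  finally show ?thesis .
qed

lemma pmf_Q_pos:
  assumes "x \<ge> 1"
  shows "pmf (Q s x) y = (if y = x + 1 then up_prob s x else if y = x - 1 then 1 - up_prob s x else 0)"
proof -
  define f where "f = (\<lambda>b. if b then x + 1 else x - 1)"
  have Q: "Q s x = map_pmf f (bernoulli_pmf (up_prob s x))"
    using assms by (simp add: Q_def f_def)
  have "inj f" using assms by (auto simp: f_def inj_def split: if_splits)
  have "s / (4 * real x) \<ge> 0" using s_nonneg by simp
  then have p: "0 \<le> up_prob s x" "up_prob s x \<le> 1"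
    by (auto simp: up_prob_def)
  consider "y = f True" | "y = f False" | "y \<notin> range f"
    by (auto simp: f_def)
  then show ?thesis
  proof cases
    case 1
    then have "pmf (Q s x) y = pmf (bernoulli_pmf (up_prob s x)) True"
      unfolding Q by (simp only: pmf_map_inj'[OF \<open>inj f\<close>])
    then show ?thesis using 1 p by (simp add: f_def)
  next
    case 2
    then have "pmf (Q s x) y = pmf (bernoulli_pmf (up_prob s x)) False"
      unfolding Q by (simp only: pmf_map_inj'[OF \<open>inj f\<close>])
    then show ?thesis using 2 p assms by (simp add: f_def)
  next
    case 3
    then have "pmf (Q s x) y = 0"
      unfolding Q by (intro pmf_map_outside) blast
    then show ?thesis using 3 by (auto simp: f_def)
  qed
qed

lemma weight_mult_pmf_Q:
  "weight x * pmf (Q s x) y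
     = (if y = x + 1 then conductance s x else 0) + (if x = y + 1 then conductance s y else 0)"
proof (cases "x = 0")
  case True
  then show ?thesis by (simp add: Q_def weight_0)
next
  case False
  then have "weight x * (1 - up_prob s x) = cdown x"
    using weight_mult_up_prob[of x] by (simp add: weight_def algebra_simps)
  then show ?thesis
    using False weight_mult_up_prob[of x] by (auto simp: pmf_Q_pos cdown_def)
qed

lemma pmf_chain_law: "pmf (chain_law s 0 t) y = weight y * heat_kernel t y"
proof (induction t arbitrary: y)
  case 0
  then show ?case using weight_pos[of 0] by (simp add: chain_law_def)
next
  case (Suc t)
  have "pmf (chain_law s 0 (Suc t)) y = (\<integral>x. pmf (Q s x) y \<partial>measure_pmf (chain_law s 0 t))"
    by (simp add: chain_law_def pmf_bind)
  also have "\<dots> = (\<Sum>x\<in>{y - 1, y + 1}. pmf (Q s x) y * pmf (chain_law s 0 t) x)"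
  proof (rule integral_measure_pmf_real)
    fix x assume "pmf (Q s x) y \<noteq> 0"
    then show "x \<in> {y - 1, y + 1}"
      using weight_mult_pmf_Q[of x y] weight_pos[of x] by (auto split: if_splits)
  qed simp
  also have "\<dots> = (\<Sum>x\<in>{y - 1, y + 1}. heat_kernel t x * (weight x * pmf (Q s x) y))"
    by (simp add: Suc.IH mult_ac)
  also have "\<dots> = conductance s y * heat_kernel t (y + 1) + cdown y * heat_kernel t (y - 1)"
    by (cases y) (simp_all add: weight_mult_pmf_Q cdown_def)
  also have "\<dots> = weight y * heat_kernel (Suc t) y"
    by (simp add: weight_mult_transition)
  finally show ?case .
qed

end

theorem lemma6p3:
  fixes s :: real
  assumes "0 \<le> s" and "s < 1"
  shows "\<exists>C>0. \<forall>t::nat. t \<ge> 1 \<longrightarrow>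
           pmf (chain_law s 0 t) 0 \<le> C * real t powr (- (1 - s) / 2)"
proof -
  interpret kernel_Q s using assms by unfold_locales
  have "pmf (chain_law s 0 t) 0 \<le> 24 * real t powr (- (1 - s) / 2)" if "t \<ge> 1" for t
  proof -
    have "pmf (chain_law s 0 t) 0 = heat_kernel t 0"
      by (simp add: pmf_chain_law weight_0)
    also have "\<dots> \<le> 8 * 3 * real t powr ((1 + s) / 2 - 1)"
      using assms that by (intro heat_kernel_return_le[OF conductance_decseq scale_le]) auto
    finally show ?thesis by (simp add: field_simps)
  qed
  then show ?thesis by (intro exI[of _ 24]) auto
qed

end
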